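(* Let $\Omega_\star$ be a discrete filtered set centred at $\omega\in\mathbb{C}$. Then the direct limit $\Omega^\infty_\star=\varinjlim_n \sum_{n\ast}\Omega_\star$ of its iterated fine sums is a discrete filtered set centred at $\omega$.
   Context: A discrete filtered set centred at $\omega$ is a family $\Omega_\star=(\Omega_L)_{L>0}$ of finite subsets of $\mathbb{C}$ with $\Omega_L\subset D(\omega,L)$ (open disc) for every $L>0$, $\Omega_{L_1}\subseteq\Omega_{L_2}$ whenever $L_1\le L_2$, and $\Omega_L=\{\omega\}$ for all sufficiently small $L>0$. The fine sum of two discrete filtered sets centred at $\omega$ is given by $(\Omega_\star\ast\Omega'_\star)_L=\{-\omega+\omega_1+\omega_2:\omega_1\in\Omega_{L_1},\omega_2\in\Omega'_{L_2},L_1+L_2=L\}$. $\sum_{n\ast}\Omega_\star$ denotes the $n$-fold fine sum $\Omega_\star\ast\cdots\ast\Omega_\star$; for each $L$ these form a direct system via the inclusions $(\sum_{n\ast}\Omega_\star)_L\hookrightarrow(\sum_{(n+1)\ast}\Omega_\star)_L$, and the direct limit is $L\mapsto\bigcup_n(\sum_{n\ast}\Omega_\star)_L$. *)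

theory Defs
  imports "HOL-Analysis.Analysis"
begin

text \<open>A filtered set is a family indexed by L > 0; values at L \<le> 0 are irrelevant.\<close>
definition discrete_filtered_set :: "(real \<Rightarrow> complex set) \<Rightarrow> complex \<Rightarrow> bool" where
  "discrete_filtered_set \<Omega> \<omega> \<longleftrightarrow>
     (\<forall>L>0. finite (\<Omega> L) \<and> \<Omega> L \<subseteq> ball \<omega> L) \<and>
     (\<forall>L1 L2. 0 < L1 \<and> L1 \<le> L2 \<longrightarrow> \<Omega> L1 \<subseteq> \<Omega> L2) \<and>
     (\<exists>\<epsilon>>0. \<forall>L. 0 < L \<and> L < \<epsilon> \<longrightarrow> \<Omega> L = {\<omega>})"

definition fs_ext :: "(real \<Rightarrow> complex set) \<Rightarrow> complex \<Rightarrow> real \<Rightarrow> complex set" where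
  "fs_ext \<Omega> \<omega> L = (if L \<le> 0 then {\<omega>} else \<Omega> L)"

definition fine_sum :: "complex \<Rightarrow> (real \<Rightarrow> complex set) \<Rightarrow> (real \<Rightarrow> complex set) \<Rightarrow> (real \<Rightarrow> complex set)" where
  "fine_sum \<omega> \<Omega> \<Omega>' L =
     {- \<omega> + w1 + w2 | w1 w2 L1 L2. 0 \<le> L1 \<and> 0 \<le> L2 \<and> L1 + L2 = L \<and>
        w1 \<in> fs_ext \<Omega> \<omega> L1 \<and> w2 \<in> fs_ext \<Omega>' \<omega> L2}"

fun fine_sum_pow :: "complex \<Rightarrow> (real \<Rightarrow> complex set) \<Rightarrow> nat \<Rightarrow> (real \<Rightarrow> complex set)" where
  "fine_sum_pow \<omega> \<Omega> 0 = (\<lambda>L. {\<omega>})"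
| "fine_sum_pow \<omega> \<Omega> (Suc 0) = \<Omega>"
| "fine_sum_pow \<omega> \<Omega> (Suc (Suc n)) = fine_sum \<omega> (fine_sum_pow \<omega> \<Omega> (Suc n)) \<Omega>"

definition fine_sum_limit :: "complex \<Rightarrow> (real \<Rightarrow> complex set) \<Rightarrow> (real \<Rightarrow> complex set)" where
  "fine_sum_limit \<omega> \<Omega> L = (\<Union>n\<in>{1..}. fine_sum_pow \<omega> \<Omega> n L)"

end

theory Submission
  imports Defs
begin

text \<open>Let \<open>\<epsilon> > 0\<close> be such that \<open>\<Omega>\<^sub>L = {\<omega>}\<close> for \<open>L < \<epsilon>\<close>. A point of \<open>\<Omega>\<^sub>L\<close> other than \<open>\<omega>\<close>
  only appears at level \<open>L \<ge> \<epsilon>\<close>, so every point of an iterated fine sum at level \<open>L\<close> is \<open>\<omega>\<close> plus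
  a sum of at most \<open>L/\<epsilon>\<close> increments \<open>w - \<omega>\<close> with \<open>w \<in> \<Omega>\<^sub>L\<close>. These form a finite set, independent
  of the number of summands, which gives finiteness of the direct limit; the remaining axioms
  pass to fine sums level by level and hence to the union.\<close>

lemma discrete_filtered_setE:
  assumes "discrete_filtered_set \<Omega> \<omega>"
  obtains \<epsilon> where "\<epsilon> > 0" "\<And>L. 0 < L \<Longrightarrow> L < \<epsilon> \<Longrightarrow> \<Omega> L = {\<omega>}"
    "\<And>L. 0 < L \<Longrightarrow> finite (\<Omega> L)" "\<And>L. 0 < L \<Longrightarrow> \<Omega> L \<subseteq> ball \<omega> L"
    "\<And>L1 L2. 0 < L1 \<Longrightarrow> L1 \<le> L2 \<Longrightarrow> \<Omega> L1 \<subseteq> \<Omega> L2"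
  using assms unfolding discrete_filtered_set_def by metis

lemma discrete_filtered_set_center:
  assumes "discrete_filtered_set \<Omega> \<omega>" "0 < L"
  shows "\<omega> \<in> \<Omega> L"
proof -
  obtain \<epsilon> where \<epsilon>: "\<epsilon> > 0" "\<And>L. 0 < L \<Longrightarrow> L < \<epsilon> \<Longrightarrow> \<Omega> L = {\<omega>}"
    and mono: "\<And>L1 L2. 0 < L1 \<Longrightarrow> L1 \<le> L2 \<Longrightarrow> \<Omega> L1 \<subseteq> \<Omega> L2"
    using discrete_filtered_setE[OF assms(1)] by metis
  have "\<Omega> (min L (\<epsilon>/2)) = {\<omega>}" by (rule \<epsilon>(2)) (use \<epsilon> assms(2) in auto)
  moreover have "\<Omega> (min L (\<epsilon>/2)) \<subseteq> \<Omega> L" by (rule mono) (use \<epsilon> assms(2) in auto)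
  ultimately show ?thesis by auto
qed

lemma fine_sum_pow_Suc_closed:
  assumes "P \<Omega>" "\<And>A. P A \<Longrightarrow> P (fine_sum \<omega> A \<Omega>)"
  shows "P (fine_sum_pow \<omega> \<Omega> (Suc n))"
  by (induction n) (simp_all add: assms)

lemma fine_sum_limit_eq_UN:
  "fine_sum_limit \<omega> \<Omega> L = (\<Union>n. fine_sum_pow \<omega> \<Omega> (Suc n) L)"
proof -
  have "{1::nat..} = range Suc"
    by (auto simp: image_iff) (metis Suc_le_D)
  then show ?thesis unfolding fine_sum_limit_def by simp
qed

lemma center_in_fine_sum:
  assumes "0 < L" "\<omega> \<in> A L"
  shows "\<omega> \<in> fine_sum \<omega> A B L"
proof -
  have "- \<omega> + \<omega> + \<omega> \<in> fine_sum \<omega> A B L"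
    unfolding fine_sum_def fs_ext_def using assms
    by (intro CollectI exI[of _ \<omega>] exI[of _ L] exI[of _ 0]) auto
  then show ?thesis by simp
qed

lemma fs_ext_mono:
  assumes "\<And>L. 0 < L \<Longrightarrow> \<omega> \<in> A L" "\<And>L1 L2. 0 < L1 \<Longrightarrow> L1 \<le> L2 \<Longrightarrow> A L1 \<subseteq> A L2"
    "0 \<le> L1" "L1 \<le> L2"
  shows "fs_ext A \<omega> L1 \<subseteq> fs_ext A \<omega> L2"
  using assms unfolding fs_ext_def by auto

lemma fine_sum_mono:
  assumes center: "\<And>L. 0 < L \<Longrightarrow> \<omega> \<in> B L"
    and mono: "\<And>L1 L2. 0 < L1 \<Longrightarrow> L1 \<le> L2 \<Longrightarrow> B L1 \<subseteq> B L2"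
    and "L1 \<le> L2"
  shows "fine_sum \<omega> A B L1 \<subseteq> fine_sum \<omega> A B L2"
proof
  fix z assume "z \<in> fine_sum \<omega> A B L1"
  then obtain w1 w2 a b where z: "z = - \<omega> + w1 + w2" "0 \<le> a" "0 \<le> b" "a + b = L1"
    "w1 \<in> fs_ext A \<omega> a" "w2 \<in> fs_ext B \<omega> b"
    by (auto simp: fine_sum_def)
  have "fs_ext B \<omega> b \<subseteq> fs_ext B \<omega> (b + (L2 - L1))"
    using z \<open>L1 \<le> L2\<close> by (intro fs_ext_mono[where A = B] center mono) auto
  then have "w2 \<in> fs_ext B \<omega> (b + (L2 - L1))" using z by blast
  then show "z \<in> fine_sum \<omega> A B L2"
    unfolding fine_sum_def using z \<open>L1 \<le> L2\<close>
    by (intro CollectI exI[of _ w1] exI[of _ w2] exI[of _ a] exI[of _ "b + (L2 - L1)"]) auto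
qed

lemma fs_ext_dist:
  assumes "\<And>L. 0 < L \<Longrightarrow> A L \<subseteq> ball \<omega> L" "0 \<le> a" "w \<in> fs_ext A \<omega> a"
  shows "w = \<omega> \<and> a = 0 \<or> dist \<omega> w < a"
proof (cases "a = 0")
  case False
  then have "w \<in> A a" "0 < a" using assms(2,3) by (auto simp: fs_ext_def)
  then show ?thesis using assms(1)[of a] by auto
qed (use assms(3) in \<open>simp add: fs_ext_def\<close>)

lemma fine_sum_subset_ball:
  assumes "\<And>L. 0 < L \<Longrightarrow> A L \<subseteq> ball \<omega> L" "\<And>L. 0 < L \<Longrightarrow> B L \<subseteq> ball \<omega> L" "0 < L"
  shows "fine_sum \<omega> A B L \<subseteq> ball \<omega> L"
proof
  fix z assume "z \<in> fine_sum \<omega> A B L"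
  then obtain w1 w2 a b where z: "z = - \<omega> + w1 + w2" "0 \<le> a" "0 \<le> b" "a + b = L"
    "w1 \<in> fs_ext A \<omega> a" "w2 \<in> fs_ext B \<omega> b"
    by (auto simp: fine_sum_def)
  have "dist w1 z = dist \<omega> w2"
    using z(1) by (simp add: dist_norm)
  then have "dist \<omega> z \<le> dist \<omega> w1 + dist \<omega> w2"
    using dist_triangle[of \<omega> z w1] by simp
  also have "\<dots> < L"
    using fs_ext_dist[OF assms(1) z(2,5)] fs_ext_dist[OF assms(2) z(3,6)] z(2-4) \<open>0 < L\<close> by auto
  finally show "z \<in> ball \<omega> L" by simp
qed

text \<open>Each increment \<open>w - \<omega>\<close> costs \<open>\<epsilon>\<close> of the budget \<open>L\<close>.\<close>
definition increment_sums :: "(real \<Rightarrow> complex set) \<Rightarrow> complex \<Rightarrow> real \<Rightarrow> real \<Rightarrow> complex set" where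
  "increment_sums \<Omega> \<omega> \<epsilon> L =
     {\<omega> + sum_list ds | ds. set ds \<subseteq> (\<lambda>w. w - \<omega>) ` \<Omega> L \<and> real (length ds) * \<epsilon> \<le> L}"

lemma center_in_increment_sums: "0 \<le> L \<Longrightarrow> \<omega> \<in> increment_sums \<Omega> \<omega> \<epsilon> L"
  unfolding increment_sums_def by (intro CollectI exI[of _ "[]"]) auto

lemma subset_increment_sums:
  assumes "\<And>L. 0 < L \<Longrightarrow> L < \<epsilon> \<Longrightarrow> \<Omega> L = {\<omega>}" "0 < L"
  shows "\<Omega> L \<subseteq> increment_sums \<Omega> \<omega> \<epsilon> L"
proof
  fix w assume w: "w \<in> \<Omega> L"
  show "w \<in> increment_sums \<Omega> \<omega> \<epsilon> L"
  proof (cases "w = \<omega>")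
    case True
    then show ?thesis using center_in_increment_sums \<open>0 < L\<close> by simp
  next
    case False
    then have "\<epsilon> \<le> L" using assms w by (metis not_le singletonD)
    then show ?thesis
      unfolding increment_sums_def using w by (intro CollectI exI[of _ "[w - \<omega>]"]) auto
  qed
qed

lemma increment_sums_add:
  assumes mono: "\<And>L1 L2. 0 < L1 \<Longrightarrow> L1 \<le> L2 \<Longrightarrow> \<Omega> L1 \<subseteq> \<Omega> L2" and "0 < \<epsilon>"
    and "0 \<le> a" "0 \<le> b"
    and "w1 \<in> increment_sums \<Omega> \<omega> \<epsilon> a" "w2 \<in> increment_sums \<Omega> \<omega> \<epsilon> b"
  shows "- \<omega> + w1 + w2 \<in> increment_sums \<Omega> \<omega> \<epsilon> (a + b)"
proof -
  have lift: "set ds \<subseteq> (\<lambda>w. w - \<omega>) ` \<Omega> (a + b)"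
    if "set ds \<subseteq> (\<lambda>w. w - \<omega>) ` \<Omega> c" "real (length ds) * \<epsilon> \<le> c" "0 \<le> c" "c \<le> a + b" for ds c
  proof (cases "ds = []")
    case False
    then have "\<epsilon> \<le> real (length ds) * \<epsilon>" using \<open>0 < \<epsilon>\<close> by (simp add: Suc_le_eq)
    then have "0 < c" using that(2) \<open>0 < \<epsilon>\<close> by linarith
    then show ?thesis using that(1,4) mono[of c "a + b"] by blast
  qed simp
  obtain ds1 ds2 where ds: "w1 = \<omega> + sum_list ds1" "set ds1 \<subseteq> (\<lambda>w. w - \<omega>) ` \<Omega> a"
      "real (length ds1) * \<epsilon> \<le> a"
    "w2 = \<omega> + sum_list ds2" "set ds2 \<subseteq> (\<lambda>w. w - \<omega>) ` \<Omega> b" "real (length ds2) * \<epsilon> \<le> b"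
    using assms(5,6) unfolding increment_sums_def by blast
  have "set (ds1 @ ds2) \<subseteq> (\<lambda>w. w - \<omega>) ` \<Omega> (a + b)"
    using lift[OF ds(2,3)] lift[OF ds(5,6)] assms(3,4) by auto
  moreover have "real (length (ds1 @ ds2)) * \<epsilon> \<le> a + b"
    using ds(3,6) by (simp add: algebra_simps)
  ultimately show ?thesis
    unfolding increment_sums_def using ds(1,4) by (intro CollectI exI[of _ "ds1 @ ds2"]) auto
qed

lemma fine_sum_subset_increment_sums:
  assumes mono: "\<And>L1 L2. 0 < L1 \<Longrightarrow> L1 \<le> L2 \<Longrightarrow> \<Omega> L1 \<subseteq> \<Omega> L2" and "0 < \<epsilon>"
    and A: "\<And>L. 0 < L \<Longrightarrow> A L \<subseteq> increment_sums \<Omega> \<omega> \<epsilon> L"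
    and B: "\<And>L. 0 < L \<Longrightarrow> B L \<subseteq> increment_sums \<Omega> \<omega> \<epsilon> L"
  shows "fine_sum \<omega> A B L \<subseteq> increment_sums \<Omega> \<omega> \<epsilon> L"
proof
  have ext: "fs_ext C \<omega> c \<subseteq> increment_sums \<Omega> \<omega> \<epsilon> c"
    if "\<And>L. 0 < L \<Longrightarrow> C L \<subseteq> increment_sums \<Omega> \<omega> \<epsilon> L" "0 \<le> c" for C c
    using that center_in_increment_sums[of c] by (auto simp: fs_ext_def)
  fix z assume "z \<in> fine_sum \<omega> A B L"
  then obtain w1 w2 a b where z: "z = - \<omega> + w1 + w2" "0 \<le> a" "0 \<le> b" "a + b = L"
    "w1 \<in> fs_ext A \<omega> a" "w2 \<in> fs_ext B \<omega> b"
    by (auto simp: fine_sum_def)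
  show "z \<in> increment_sums \<Omega> \<omega> \<epsilon> L"
    using increment_sums_add[where \<Omega> = \<Omega>, OF mono \<open>0 < \<epsilon>\<close> z(2,3)]
      ext[where C = A, OF A z(2)] ext[where C = B, OF B z(3)] z
    by blast
qed

lemma finite_increment_sums:
  assumes "finite (\<Omega> L)" "0 < \<epsilon>"
  shows "finite (increment_sums \<Omega> \<omega> \<epsilon> L)"
proof -
  define D where "D = {ds. set ds \<subseteq> (\<lambda>w. w - \<omega>) ` \<Omega> L \<and> length ds \<le> nat \<lceil>L / \<epsilon>\<rceil>}"
  have "increment_sums \<Omega> \<omega> \<epsilon> L \<subseteq> (\<lambda>ds. \<omega> + sum_list ds) ` D"
  proof
    fix z assume "z \<in> increment_sums \<Omega> \<omega> \<epsilon> L"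
    then obtain ds where ds: "z = \<omega> + sum_list ds" "set ds \<subseteq> (\<lambda>w. w - \<omega>) ` \<Omega> L"
      "real (length ds) * \<epsilon> \<le> L" unfolding increment_sums_def by blast
    have "real (length ds) \<le> L / \<epsilon>" using ds(3) assms(2) by (simp add: field_simps)
    then have "length ds \<le> nat \<lceil>L / \<epsilon>\<rceil>" by linarith
    then show "z \<in> (\<lambda>ds. \<omega> + sum_list ds) ` D" using ds unfolding D_def by blast
  qed
  moreover have "finite D"
    unfolding D_def using finite_lists_length_le assms(1) by blast
  ultimately show ?thesis using finite_subset by blast
qed

lemma increment_sums_below_cost:
  assumes "0 < \<epsilon>" "L < \<epsilon>"
  shows "increment_sums \<Omega> \<omega> \<epsilon> L \<subseteq> {\<omega>}"
proof
  fix z assume "z \<in> increment_sums \<Omega> \<omega> \<epsilon> L"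
  then obtain ds where ds: "z = \<omega> + sum_list ds" "real (length ds) * \<epsilon> \<le> L"
    unfolding increment_sums_def by blast
  have "ds = []"
  proof (rule ccontr)
    assume "ds \<noteq> []"
    then have "1 * \<epsilon> \<le> real (length ds) * \<epsilon>"
      using assms(1) by (intro mult_right_mono) (auto simp: Suc_le_eq)
    then show False using ds(2) assms(2) by linarith
  qed
  then show "z \<in> {\<omega>}" using ds by simp
qed

lemma fine_sum_pow_center:
  assumes "discrete_filtered_set \<Omega> \<omega>" "0 < L"
  shows "\<omega> \<in> fine_sum_pow \<omega> \<Omega> (Suc n) L"
proof -
  have "\<forall>L>0. \<omega> \<in> fine_sum_pow \<omega> \<Omega> (Suc n) L"
    by (rule fine_sum_pow_Suc_closed[where P = "\<lambda>A. \<forall>L>0. \<omega> \<in> A L"])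
      (use discrete_filtered_set_center[OF assms(1)] center_in_fine_sum in auto)
  then show ?thesis using assms(2) by blast
qed

lemma fine_sum_pow_mono:
  assumes "discrete_filtered_set \<Omega> \<omega>" "0 < L1" "L1 \<le> L2"
  shows "fine_sum_pow \<omega> \<Omega> (Suc n) L1 \<subseteq> fine_sum_pow \<omega> \<Omega> (Suc n) L2"
proof -
  obtain mono: "\<And>L1 L2. 0 < L1 \<Longrightarrow> L1 \<le> L2 \<Longrightarrow> \<Omega> L1 \<subseteq> \<Omega> L2"
    using discrete_filtered_setE[OF assms(1)] by metis
  note center = discrete_filtered_set_center[OF assms(1)]
  have "\<forall>L1 L2. 0 < L1 \<and> L1 \<le> L2 \<longrightarrow> fine_sum_pow \<omega> \<Omega> (Suc n) L1 \<subseteq> fine_sum_pow \<omega> \<Omega> (Suc n) L2"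
    by (rule fine_sum_pow_Suc_closed[where P = "\<lambda>A. \<forall>L1 L2. 0 < L1 \<and> L1 \<le> L2 \<longrightarrow> A L1 \<subseteq> A L2"])
      (use mono fine_sum_mono[where B = \<Omega>, OF center mono] in blast)+
  then show ?thesis using assms(2,3) by blast
qed

lemma fine_sum_pow_subset_ball:
  assumes "discrete_filtered_set \<Omega> \<omega>" "0 < L"
  shows "fine_sum_pow \<omega> \<Omega> (Suc n) L \<subseteq> ball \<omega> L"
proof -
  obtain ball: "\<And>L. 0 < L \<Longrightarrow> \<Omega> L \<subseteq> ball \<omega> L"
    using discrete_filtered_setE[OF assms(1)] by metis
  have "\<forall>L>0. fine_sum_pow \<omega> \<Omega> (Suc n) L \<subseteq> ball \<omega> L"
    by (rule fine_sum_pow_Suc_closed[where P = "\<lambda>A. \<forall>L>0. A L \<subseteq> ball \<omega> L"])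
      (use ball fine_sum_subset_ball[where B = \<Omega>, OF _ ball] in blast)+
  then show ?thesis using assms(2) by blast
qed

lemma fine_sum_pow_subset_increment_sums:
  assumes "discrete_filtered_set \<Omega> \<omega>" "0 < \<epsilon>" "\<And>L. 0 < L \<Longrightarrow> L < \<epsilon> \<Longrightarrow> \<Omega> L = {\<omega>}"
    and "0 < L"
  shows "fine_sum_pow \<omega> \<Omega> (Suc n) L \<subseteq> increment_sums \<Omega> \<omega> \<epsilon> L"
proof -
  obtain mono: "\<And>L1 L2. 0 < L1 \<Longrightarrow> L1 \<le> L2 \<Longrightarrow> \<Omega> L1 \<subseteq> \<Omega> L2"
    using discrete_filtered_setE[OF assms(1)] by metis
  have "\<forall>L>0. fine_sum_pow \<omega> \<Omega> (Suc n) L \<subseteq> increment_sums \<Omega> \<omega> \<epsilon> L"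
    by (rule fine_sum_pow_Suc_closed[where P = "\<lambda>A. \<forall>L>0. A L \<subseteq> increment_sums \<Omega> \<omega> \<epsilon> L"])
      (use subset_increment_sums[where \<Omega> = \<Omega>, OF assms(3)]
        fine_sum_subset_increment_sums[where \<Omega> = \<Omega> and B = \<Omega>, OF mono assms(2)] in blast)+
  then show ?thesis using assms(4) by blast
qed

theorem proposition2p4:
  fixes \<Omega> :: "real \<Rightarrow> complex set" and \<omega> :: complex
  assumes "discrete_filtered_set \<Omega> \<omega>"
  shows "discrete_filtered_set (fine_sum_limit \<omega> \<Omega>) \<omega>"
proof -
  obtain \<epsilon> where \<epsilon>: "\<epsilon> > 0" "\<And>L. 0 < L \<Longrightarrow> L < \<epsilon> \<Longrightarrow> \<Omega> L = {\<omega>}"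
    and fin: "\<And>L. 0 < L \<Longrightarrow> finite (\<Omega> L)"
    using discrete_filtered_setE[OF assms] by metis
  have bound: "fine_sum_limit \<omega> \<Omega> L \<subseteq> increment_sums \<Omega> \<omega> \<epsilon> L \<inter> ball \<omega> L" if "0 < L" for L
    unfolding fine_sum_limit_eq_UN
    using fine_sum_pow_subset_increment_sums[OF assms \<epsilon> that] fine_sum_pow_subset_ball[OF assms that]
    by blast
  have "fine_sum_limit \<omega> \<Omega> L = {\<omega>}" if "0 < L" "L < \<epsilon>" for L
    using bound[OF that(1)] increment_sums_below_cost[OF \<epsilon>(1) that(2)]
      fine_sum_pow_center[OF assms that(1), of 0]
    unfolding fine_sum_limit_eq_UN by blast
  moreover have "finite (fine_sum_limit \<omega> \<Omega> L)" if "0 < L" for L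
    using bound[OF that] finite_increment_sums[where \<Omega> = \<Omega> and L = L, OF fin[OF that] \<epsilon>(1)]
    by (meson finite_subset le_infE)
  moreover have "fine_sum_limit \<omega> \<Omega> L1 \<subseteq> fine_sum_limit \<omega> \<Omega> L2" if "0 < L1" "L1 \<le> L2" for L1 L2
    unfolding fine_sum_limit_eq_UN using fine_sum_pow_mono[OF assms that] by blast
  ultimately show ?thesis
    unfolding discrete_filtered_set_def using bound \<epsilon>(1) by (meson le_infE)
qed

end
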